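(* Let $H$ be a numerical semigroup, $k$ a field, $R=k[H]$ Gorenstein, $a=\mathrm{a}(R)$, and let $\mathcal{X}_R$ be the set of graded ideals $I$ of $R$ with $R/I$ Gorenstein and $\mu_R(I)\ge 2$. For $I\in\mathcal{X}_R$ set $J=t^{a-\mathrm{a}(R/I)}I\subseteq k[t,t^{-1}]$. Then: (1) $J\in\mathcal{X}_R$ and $\mathrm{a}(R/J)=2a-\mathrm{a}(R/I)$; hence if $\mathrm{a}(R/I)<a$ (resp. $>a$) then $\mathrm{a}(R/J)>a$ (resp. $<a$); (2) $\mathrm{a}(R/I)\in H$, $a\ne\mathrm{a}(R/I)$, and $a-\mathrm{a}(R/I)\in\mathbb{Z}\setminus H$; (3) if $\mathrm{a}(R/I)<a$ then $a-\mathrm{a}(R/I)\in\mathbb{N}\setminus H$; (4) if $\mathrm{a}(R/I)>a$ then $\mathrm{a}(R/I)-a\in\mathbb{N}\setminus H$.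
   Context: $R=k[H]=k[t^h\mid h\in H]\subseteq k[t]$ graded by $\deg t=1$; $\mathrm{a}(R)=\mathrm{c}(H)-1=\max(\mathbb{Z}\setminus H)$ where $\mathrm{c}(H)$ is the conductor of $H$; for an Artinian graded quotient $R/I$, $\mathrm{a}(R/I)$ is the largest $n$ with $[R/I]_n\ne 0$. $R$ Gorenstein is equivalent to $H$ symmetric. $\mu_R(I)$ is the minimal number of generators. *)

theory Defs
  imports "HOL-Computational_Algebra.Formal_Laurent_Series"
begin

text \<open>Everything lives inside the Laurent series ring k((t)); the Laurent polynomial
  ring k[t,t^-1] is the set of Laurent series with finite support, and
  R = k[H] is the set of Laurent series with finite support contained in H.\<close>

definition numerical_semigroup :: "nat set \<Rightarrow> bool" where
  "numerical_semigroup H \<longleftrightarrow> 0 \<in> H \<and> (\<forall>x\<in>H. \<forall>y\<in>H. x + y \<in> H) \<and> finite (UNIV - H)"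

text \<open>a(R) = c(H) - 1 = max (Z \ H).\<close>
definition a_inv :: "nat set \<Rightarrow> int" where
  "a_inv H = (GREATEST z::int. z \<notin> int ` H)"

definition symmetric_sg :: "nat set \<Rightarrow> bool" where
  "symmetric_sg H \<longleftrightarrow> (\<forall>z::int. z \<in> int ` H \<longleftrightarrow> a_inv H - z \<notin> int ` H)"

definition semigroup_ring :: "nat set \<Rightarrow> 'k::field fls set" where
  "semigroup_ring H = {f. finite {n. fls_nth f n \<noteq> 0} \<and> (\<forall>n. fls_nth f n \<noteq> 0 \<longrightarrow> n \<in> int ` H)}"

definition homogeneous_of_deg :: "int \<Rightarrow> 'k::field fls \<Rightarrow> bool" where
  "homogeneous_of_deg d f \<longleftrightarrow> (\<forall>n. fls_nth f n \<noteq> 0 \<longrightarrow> n = d)"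

definition is_ideal :: "'k::field fls set \<Rightarrow> 'k fls set \<Rightarrow> bool" where
  "is_ideal R I \<longleftrightarrow> I \<subseteq> R \<and> 0 \<in> I \<and> (\<forall>f\<in>I. \<forall>g\<in>I. f + g \<in> I) \<and> (\<forall>r\<in>R. \<forall>f\<in>I. r * f \<in> I)"

definition is_graded_ideal :: "'k::field fls set \<Rightarrow> 'k fls set \<Rightarrow> bool" where
  "is_graded_ideal R I \<longleftrightarrow> is_ideal R I \<and>
     (\<forall>f\<in>I. \<forall>n. fls_const (fls_nth f n) * fls_X_intpow n \<in> I)"

definition ideal_gen :: "'k::field fls set \<Rightarrow> 'k fls set \<Rightarrow> 'k fls set" where
  "ideal_gen R G = {\<Sum>g\<in>G. c g * g | c. \<forall>g\<in>G. c g \<in> R}"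

definition mu :: "'k::field fls set \<Rightarrow> 'k fls set \<Rightarrow> nat" where
  "mu R I = (LEAST m. \<exists>G. finite G \<and> card G = m \<and> G \<subseteq> I \<and> ideal_gen R G = I)"

text \<open>[R/I]_n \<noteq> 0 : some homogeneous element of R of degree n is not in I.\<close>
definition quot_comp_nonzero :: "'k::field fls set \<Rightarrow> 'k fls set \<Rightarrow> int \<Rightarrow> bool" where
  "quot_comp_nonzero R I n \<longleftrightarrow> (\<exists>f\<in>R. homogeneous_of_deg n f \<and> f \<notin> I)"

definition a_quot :: "'k::field fls set \<Rightarrow> 'k fls set \<Rightarrow> int" where
  "a_quot R I = (GREATEST n. quot_comp_nonzero R I n)"

definition max_ideal :: "'k::field fls set \<Rightarrow> 'k fls set" where
  "max_ideal R = {f\<in>R. fls_nth f 0 = 0}"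

definition colon :: "'k::field fls set \<Rightarrow> 'k fls set \<Rightarrow> 'k fls set \<Rightarrow> 'k fls set" where
  "colon R I M = {f\<in>R. \<forall>m\<in>M. f * m \<in> I}"

text \<open>R/I is Artinian: finite-dimensional over k.\<close>
definition artinian_quot :: "'k::field fls set \<Rightarrow> 'k fls set \<Rightarrow> bool" where
  "artinian_quot R I \<longleftrightarrow> (\<exists>B. finite B \<and> B \<subseteq> R \<and>
      (\<forall>f\<in>R. \<exists>c. f - (\<Sum>b\<in>B. fls_const (c b) * b) \<in> I))"

text \<open>Artinian graded local R/I is Gorenstein iff its socle (I :_R m)/I is
  one-dimensional over k.\<close>
definition gorenstein_quot :: "'k::field fls set \<Rightarrow> 'k fls set \<Rightarrow> bool" where
  "gorenstein_quot R I \<longleftrightarrow> artinian_quot R I \<and>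
     (\<exists>s\<in>colon R I (max_ideal R) - I. \<forall>f\<in>colon R I (max_ideal R). \<exists>c. f - fls_const c * s \<in> I)"

definition X_R :: "'k::field fls set \<Rightarrow> 'k fls set set" where
  "X_R R = {I. is_graded_ideal R I \<and> gorenstein_quot R I \<and> mu R I \<ge> 2}"

end

(* A graded ideal of R = k[H] is spanned by the monomials it contains, so everything reduces to
   sets of exponents.  If R/I is Gorenstein, its socle is spanned by a single monomial t^b with
   b = a(R/I) in H, and every monomial of R outside I divides t^b; hence
   I = I_b = (t^h | h in H, b - h not in H), and conversely each such I_b is Gorenstein with
   a(R/I_b) = b.  For symmetric H with a = a(R), the symmetry (h in H <-> a - h not in H) gives
   t^(a-b) I_b = I_(2a-b), which is J.  Finally b - a is not in H, since otherwise
   I_b = t^(b-a) R would be principal, contradicting mu(I) >= 2; the remaining claims follow from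
   symmetry and a not in H. *)

theory Submission
  imports Defs
begin

unbundle fps_syntax

definition fls_support :: "'a::zero fls \<Rightarrow> int set" where
  "fls_support f = {n. f $$ n \<noteq> 0}"

definition monomial_span :: "int set \<Rightarrow> 'a::zero fls set" where
  "monomial_span E = {f. finite (fls_support f) \<and> fls_support f \<subseteq> E}"

definition monomial_exponents :: "'a::semiring_1 fls set \<Rightarrow> int set" where
  "monomial_exponents I = {n. fls_X_intpow n \<in> I}"

text \<open>Since \<open>fls_X_intpow\<close> abbreviates \<open>\<lambda>i. fls_shift (-i) 1\<close> and the simplifier
  normalises the negated exponent, simp rules about monomials are stated for \<open>fls_shift m 1\<close>.\<close>

lemma fls_shift_one_times_nth [simp]:
  "(fls_shift m 1 * f :: 'a::semiring_1 fls) $$ n = f $$ (n + m)"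
  by (simp add: fls_shifted_times_simps)

lemma fls_support_fls_X_intpow_times:
  "fls_support (fls_X_intpow c * f :: 'a::semiring_1 fls) = (+) c ` fls_support f"
  by (force simp: fls_support_def image_iff)

lemma fls_shift_one_in_monomial_span_iff [simp]:
  "(fls_shift m 1 :: 'a::zero_neq_one fls) \<in> monomial_span E \<longleftrightarrow> -m \<in> E"
proof -
  have "fls_support (fls_shift m 1 :: 'a fls) = {-m}"
    by (auto simp: fls_support_def)
  then show ?thesis
    by (simp add: monomial_span_def)
qed

lemma monomial_span_mono: "E \<subseteq> F \<Longrightarrow> monomial_span E \<subseteq> monomial_span F"
  by (auto simp: monomial_span_def)

lemma fls_eq_sum_monomials:
  fixes f :: "'k::field fls"
  assumes "finite (fls_support f)"
  shows "f = (\<Sum>m\<in>fls_support f. fls_const (f $$ m) * fls_X_intpow m)"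
proof (rule fls_eqI)
  fix n
  have "(\<Sum>m\<in>fls_support f. (fls_const (f $$ m) * fls_X_intpow m) $$ n)
      = (\<Sum>m\<in>fls_support f. if n = m then f $$ m else 0)"
    by (rule sum.cong) auto
  also have "\<dots> = f $$ n"
    using assms by (auto simp: fls_support_def)
  finally show "f $$ n = (\<Sum>m\<in>fls_support f. fls_const (f $$ m) * fls_X_intpow m) $$ n"
    by (simp add: fls_nth_sum)
qed

lemma image_times_fls_X_intpow_monomial_span:
  "(*) (fls_X_intpow c) ` monomial_span E = (monomial_span ((+) c ` E) :: 'k::field fls set)"
proof
  show "(*) (fls_X_intpow c) ` monomial_span E \<subseteq> (monomial_span ((+) c ` E) :: 'k fls set)"
    by (fastforce simp: monomial_span_def fls_support_fls_X_intpow_times)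
  show "monomial_span ((+) c ` E) \<subseteq> (*) (fls_X_intpow c) ` (monomial_span E :: 'k fls set)"
  proof
    fix g :: "'k fls"
    assume g: "g \<in> monomial_span ((+) c ` E)"
    have "(+) (-c) ` fls_support g \<subseteq> E"
      using g by (force simp: monomial_span_def)
    then have "fls_X_intpow (-c) * g \<in> monomial_span E"
      using g unfolding monomial_span_def mem_Collect_eq fls_support_fls_X_intpow_times by simp
    moreover have "g = fls_X_intpow c * (fls_X_intpow (-c) * g)"
      by (simp only: mult.assoc[symmetric] fls_X_intpow_times_fls_X_intpow) simp
    ultimately show "g \<in> (*) (fls_X_intpow c) ` monomial_span E"
      by blast
  qed
qed

lemma numerical_semigroup_zero: "numerical_semigroup H \<Longrightarrow> 0 \<in> int ` H"
  unfolding numerical_semigroup_def by force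

lemma numerical_semigroup_add:
  "numerical_semigroup H \<Longrightarrow> x \<in> int ` H \<Longrightarrow> y \<in> int ` H \<Longrightarrow> x + y \<in> int ` H"
  unfolding numerical_semigroup_def by (auto simp flip: of_nat_add)

lemma semigroup_ring_eq_monomial_span: "semigroup_ring H = monomial_span (int ` H)"
  unfolding semigroup_ring_def monomial_span_def fls_support_def by auto

lemma fls_const_in_semigroup_ring:
  "numerical_semigroup H \<Longrightarrow> (fls_const c :: 'k::field fls) \<in> semigroup_ring H"
  using numerical_semigroup_zero[of H]
  by (auto simp: semigroup_ring_eq_monomial_span monomial_span_def fls_support_def
      intro: finite_subset[of _ "{0}"])

lemma is_ideal_sum:
  assumes "is_ideal R I" "\<forall>x\<in>S. g x \<in> I"
  shows "sum g S \<in> I"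
proof (cases "finite S")
  case True
  then show ?thesis
    using assms by (induction S rule: finite_induct) (simp_all add: is_ideal_def)
next
  case False
  then show ?thesis
    using assms(1) by (simp add: is_ideal_def)
qed

subsection \<open>Graded ideals are spanned by monomials\<close>

lemma fls_X_intpow_in_graded_ideal:
  fixes I :: "'k::field fls set"
  assumes ns: "numerical_semigroup H" and gi: "is_graded_ideal (semigroup_ring H) I"
    and f: "f \<in> I" and n: "f $$ n \<noteq> 0"
  shows "fls_X_intpow n \<in> I"
proof -
  have "fls_const (f $$ n) * fls_X_intpow n \<in> I"
    using gi f by (simp add: is_graded_ideal_def)
  then have "fls_const (inverse (f $$ n)) * (fls_const (f $$ n) * fls_X_intpow n) \<in> I"
    using gi fls_const_in_semigroup_ring[OF ns] unfolding is_graded_ideal_def is_ideal_def by blast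
  then show ?thesis
    using n by (simp add: mult.assoc[symmetric])
qed

lemma graded_ideal_eq_monomial_span:
  fixes I :: "'k::field fls set"
  assumes ns: "numerical_semigroup H" and gi: "is_graded_ideal (semigroup_ring H) I"
  shows "I = monomial_span (monomial_exponents I)"
proof
  have id: "is_ideal (semigroup_ring H) I"
    using gi by (simp add: is_graded_ideal_def)
  show "I \<subseteq> monomial_span (monomial_exponents I)"
  proof
    fix f assume f: "f \<in> I"
    then have "finite (fls_support f)"
      using id by (auto simp: is_ideal_def semigroup_ring_eq_monomial_span monomial_span_def)
    then show "f \<in> monomial_span (monomial_exponents I)"
      using fls_X_intpow_in_graded_ideal[OF ns gi f]
      by (auto simp: monomial_span_def monomial_exponents_def fls_support_def)
  qed
  show "monomial_span (monomial_exponents I) \<subseteq> I"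
  proof
    fix f :: "'k fls"
    assume f: "f \<in> monomial_span (monomial_exponents I)"
    have "fls_X_intpow m \<in> I" if "m \<in> fls_support f" for m
      using f that by (auto simp: monomial_span_def monomial_exponents_def)
    then have "(\<Sum>m\<in>fls_support f. fls_const (f $$ m) * fls_X_intpow m) \<in> I"
      using id fls_const_in_semigroup_ring[OF ns] unfolding is_ideal_def
      by (intro is_ideal_sum[OF id]) blast
    then show "f \<in> I"
      using f fls_eq_sum_monomials by (force simp: monomial_span_def)
  qed
qed

lemma monomial_exponents_subset:
  "is_ideal (semigroup_ring H) I \<Longrightarrow> monomial_exponents I \<subseteq> int ` H"
  by (auto simp: is_ideal_def monomial_exponents_def semigroup_ring_eq_monomial_span)

lemma monomial_exponents_add:
  assumes "is_ideal (semigroup_ring H) I" "n \<in> monomial_exponents I" "h \<in> int ` H"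
  shows "n + h \<in> monomial_exponents I"
proof -
  have "fls_X_intpow h * fls_X_intpow n \<in> I"
    using assms unfolding is_ideal_def monomial_exponents_def
    by (simp add: semigroup_ring_eq_monomial_span)
  then show ?thesis
    by (simp add: monomial_exponents_def fls_X_intpow_times_fls_X_intpow add.commute)
qed

lemma quot_comp_nonzero_monomial_span:
  assumes "E \<subseteq> int ` H"
  shows "quot_comp_nonzero (semigroup_ring H) (monomial_span E :: 'k::field fls set) n
    \<longleftrightarrow> n \<in> int ` H - E"
proof
  assume "quot_comp_nonzero (semigroup_ring H) (monomial_span E :: 'k fls set) n"
  then obtain f :: "'k fls" where f: "f \<in> monomial_span (int ` H)" "homogeneous_of_deg n f"
      "f \<notin> monomial_span E"
    unfolding quot_comp_nonzero_def semigroup_ring_eq_monomial_span by blast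
  then obtain m where "f $$ m \<noteq> 0" "m \<notin> E"
    by (auto simp: monomial_span_def fls_support_def)
  with f(1,2) show "n \<in> int ` H - E"
    by (auto simp: homogeneous_of_deg_def monomial_span_def fls_support_def)
next
  assume "n \<in> int ` H - E"
  then show "quot_comp_nonzero (semigroup_ring H) (monomial_span E :: 'k fls set) n"
    unfolding quot_comp_nonzero_def semigroup_ring_eq_monomial_span
    by (intro bexI[of _ "fls_X_intpow n"]) (auto simp: homogeneous_of_deg_def)
qed

subsection \<open>Gorenstein graded quotients\<close>

definition socle_exponent :: "nat set \<Rightarrow> int set \<Rightarrow> int \<Rightarrow> bool" where
  "socle_exponent H E n \<longleftrightarrow> n \<in> int ` H - E \<and> (\<forall>h\<in>int ` H. h \<noteq> 0 \<longrightarrow> n + h \<in> E)"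

definition gorenstein_exponents :: "nat set \<Rightarrow> int \<Rightarrow> int set" where
  "gorenstein_exponents H b = {n \<in> int ` H. b - n \<notin> int ` H}"

lemma gorenstein_exponents_subset: "gorenstein_exponents H b \<subseteq> int ` H"
  by (auto simp: gorenstein_exponents_def)

lemma fls_X_intpow_in_colon_max_ideal:
  assumes "n \<in> int ` H" "\<forall>h\<in>int ` H. h \<noteq> 0 \<longrightarrow> n + h \<in> E"
  shows "fls_X_intpow n \<in> colon (semigroup_ring H) (monomial_span E :: 'k::field fls set)
    (max_ideal (semigroup_ring H))"
proof -
  have "fls_X_intpow n * m \<in> monomial_span E" if m: "m \<in> max_ideal (semigroup_ring H)" for m :: "'k fls"
  proof -
    have "fls_support m \<subseteq> int ` H - {0}" "finite (fls_support m)"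
      using m by (auto simp: max_ideal_def semigroup_ring_eq_monomial_span monomial_span_def
          fls_support_def)
    moreover have "n + k \<in> E" if "k \<in> fls_support m" for k
      using assms(2) that \<open>fls_support m \<subseteq> int ` H - {0}\<close> by blast
    ultimately show ?thesis
      by (auto simp: monomial_span_def fls_support_fls_X_intpow_times)
  qed
  then show ?thesis
    using assms(1) by (simp add: colon_def semigroup_ring_eq_monomial_span)
qed

lemma socle_exponent_above:
  assumes ns: "numerical_semigroup H"
    and closed: "\<And>n h. n \<in> E \<Longrightarrow> h \<in> int ` H \<Longrightarrow> n + h \<in> E"
    and fin: "finite (int ` H - E)" and n: "n \<in> int ` H - E"
  shows "\<exists>m. socle_exponent H E m \<and> m - n \<in> int ` H"
proof -
  define T where "T = {m \<in> int ` H - E. m - n \<in> int ` H}"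
  have "finite T"
    by (rule finite_subset[OF _ fin]) (auto simp: T_def)
  moreover have "n \<in> T"
    using n numerical_semigroup_zero[OF ns] by (simp add: T_def)
  ultimately have mT: "Max T \<in> T"
    by (intro Max_in) auto
  have "Max T + h \<in> E" if h: "h \<in> int ` H" "h \<noteq> 0" for h
  proof (rule ccontr)
    assume "Max T + h \<notin> E"
    moreover have "Max T + h \<in> int ` H" "(Max T - n) + h \<in> int ` H"
      using numerical_semigroup_add[OF ns] mT h(1) by (auto simp: T_def)
    ultimately have "Max T + h \<in> T"
      by (simp add: T_def algebra_simps)
    then have "Max T + h \<le> Max T"
      using \<open>finite T\<close> by (rule Max_ge[rotated])
    then show False
      using h by auto
  qed
  then show ?thesis
    using mT by (auto simp: T_def socle_exponent_def)
qed

lemma gorenstein_socle_exponent_unique: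
  fixes I :: "'k::field fls set"
  assumes ns: "numerical_semigroup H" and gi: "is_graded_ideal (semigroup_ring H) I"
    and gor: "gorenstein_quot (semigroup_ring H) I"
    and n: "socle_exponent H (monomial_exponents I) n"
    and m: "socle_exponent H (monomial_exponents I) m"
  shows "n = m"
proof (rule ccontr)
  assume "n \<noteq> m"
  define R where "R = (semigroup_ring H :: 'k fls set)"
  obtain s where s: "\<forall>f\<in>colon R I (max_ideal R). \<exists>c. f - fls_const c * s \<in> I"
    using gor by (auto simp: gorenstein_quot_def R_def)
  have in_colon: "fls_X_intpow k \<in> colon R I (max_ideal R)"
    if "socle_exponent H (monomial_exponents I) k" for k
  proof -
    have "fls_X_intpow k \<in> colon R (monomial_span (monomial_exponents I)) (max_ideal R)"
      using that fls_X_intpow_in_colon_max_ideal by (auto simp: socle_exponent_def R_def)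
    then show ?thesis
      by (simp only: graded_ideal_eq_monomial_span[OF ns gi, symmetric])
  qed
  have vanish: "g $$ k = 0" if "g \<in> I" "socle_exponent H (monomial_exponents I) k" for g k
    using fls_X_intpow_in_graded_ideal[OF ns gi that(1)] that(2)
    by (auto simp: socle_exponent_def monomial_exponents_def)
  obtain c1 where c1: "fls_X_intpow n - fls_const c1 * s \<in> I"
    using s in_colon[OF n] by blast
  obtain c2 where c2: "fls_X_intpow m - fls_const c2 * s \<in> I"
    using s in_colon[OF m] by blast
  have "1 - c1 * s $$ n = 0" "c1 * s $$ m = 0" "1 - c2 * s $$ m = 0"
    using vanish[OF c1 n] vanish[OF c1 m] vanish[OF c2 m] \<open>n \<noteq> m\<close> by simp_all
  then show False
    by auto
qed

lemma finite_gaps_if_artinian_quot: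
  fixes I :: "'k::field fls set"
  assumes ns: "numerical_semigroup H" and gi: "is_graded_ideal (semigroup_ring H) I"
    and art: "artinian_quot (semigroup_ring H) I"
  shows "finite (int ` H - monomial_exponents I)"
proof -
  obtain B where B: "finite B" "B \<subseteq> semigroup_ring H"
    "\<forall>f\<in>semigroup_ring H. \<exists>c. f - (\<Sum>b\<in>B. fls_const (c b) * b) \<in> I"
    using art by (auto simp: artinian_quot_def)
  define N where "N = Max (insert 0 (\<Union>b\<in>B. fls_support b))"
  have finU: "finite (insert 0 (\<Union>b\<in>B. fls_support b))"
    using B(1,2) by (auto simp: semigroup_ring_eq_monomial_span monomial_span_def)
  have "n \<le> N" if n: "n \<in> int ` H - monomial_exponents I" for n
  proof (rule ccontr)
    assume "\<not> n \<le> N"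
    have "b $$ n = 0" if "b \<in> B" for b
    proof (rule ccontr)
      assume "b $$ n \<noteq> 0"
      then have "n \<in> insert 0 (\<Union>b\<in>B. fls_support b)"
        using that by (auto simp: fls_support_def)
      then have "n \<le> N"
        unfolding N_def using finU by (rule Max_ge[rotated])
      with \<open>\<not> n \<le> N\<close> show False ..
    qed
    moreover have "fls_X_intpow n \<in> semigroup_ring H"
      using n by (simp add: semigroup_ring_eq_monomial_span)
    then obtain c where c: "fls_X_intpow n - (\<Sum>b\<in>B. fls_const (c b) * b) \<in> I"
      using B(3) by blast
    ultimately have "fls_X_intpow n \<in> I"
      using fls_X_intpow_in_graded_ideal[OF ns gi c] by (simp add: fls_nth_sum)
    then show False
      using n by (simp add: monomial_exponents_def)
  qed
  then have "int ` H - monomial_exponents I \<subseteq> {0..N}"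
    by auto
  then show ?thesis
    by (rule finite_subset) simp
qed

lemma a_quot_gorenstein_exponents:
  assumes ns: "numerical_semigroup H" and b: "b \<in> int ` H"
  shows "a_quot (semigroup_ring H) (monomial_span (gorenstein_exponents H b) :: 'k::field fls set) = b"
  unfolding a_quot_def quot_comp_nonzero_monomial_span[OF gorenstein_exponents_subset]
proof (rule Greatest_equality)
  show "b \<in> int ` H - gorenstein_exponents H b"
    using b numerical_semigroup_zero[OF ns] by (simp add: gorenstein_exponents_def)
  show "y \<le> b" if "y \<in> int ` H - gorenstein_exponents H b" for y
    using that by (force simp: gorenstein_exponents_def)
qed

theorem gorenstein_graded_ideal_eq:
  fixes I :: "'k::field fls set"
  assumes ns: "numerical_semigroup H" and gi: "is_graded_ideal (semigroup_ring H) I"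
    and gor: "gorenstein_quot (semigroup_ring H) I"
  shows "a_quot (semigroup_ring H) I \<in> int ` H
    \<and> I = monomial_span (gorenstein_exponents H (a_quot (semigroup_ring H) I))"
proof -
  let ?E = "monomial_exponents I"
  have id: "is_ideal (semigroup_ring H) I"
    using gi by (simp add: is_graded_ideal_def)
  have I_eq: "I = monomial_span ?E"
    by (rule graded_ideal_eq_monomial_span[OF ns gi])
  have EH: "?E \<subseteq> int ` H"
    by (rule monomial_exponents_subset[OF id])
  have fin: "finite (int ` H - ?E)"
    using finite_gaps_if_artinian_quot[OF ns gi] gor by (simp add: gorenstein_quot_def)
  have "int ` H - ?E \<noteq> {}"
  proof
    assume "int ` H - ?E = {}"
    then have "semigroup_ring H \<subseteq> I"
      by (subst I_eq) (auto simp: semigroup_ring_eq_monomial_span monomial_span_def)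
    then show False
      using gor by (auto simp: gorenstein_quot_def colon_def)
  qed
  then obtain b where b: "socle_exponent H ?E b"
    using socle_exponent_above[OF ns monomial_exponents_add[OF id] fin] by blast
  have "b - n \<in> int ` H" if n: "n \<in> int ` H - ?E" for n
  proof -
    obtain m where "socle_exponent H ?E m" "m - n \<in> int ` H"
      using socle_exponent_above[OF ns monomial_exponents_add[OF id] fin n] by blast
    then show ?thesis
      using gorenstein_socle_exponent_unique[OF ns gi gor b] by simp
  qed
  moreover have "n \<notin> ?E" if "b - n \<in> int ` H" for n
    using monomial_exponents_add[OF id, of n "b - n"] that b by (auto simp: socle_exponent_def)
  ultimately have "?E = gorenstein_exponents H b"
    using EH by (auto simp: gorenstein_exponents_def)
  then have I_b: "I = monomial_span (gorenstein_exponents H b)"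
    using I_eq by simp
  moreover have bH: "b \<in> int ` H"
    using b by (simp add: socle_exponent_def)
  moreover have "a_quot (semigroup_ring H) I = b"
    unfolding I_b by (rule a_quot_gorenstein_exponents[OF ns bH])
  ultimately show ?thesis
    by simp
qed

lemma artinian_quot_monomial_span:
  assumes fin: "finite (int ` H - E)"
  shows "artinian_quot (semigroup_ring H) (monomial_span E :: 'k::field fls set)"
  unfolding artinian_quot_def
proof (intro exI[of _ "fls_X_intpow ` (int ` H - E)"] conjI ballI)
  let ?S = "int ` H - E"
  show "finite (fls_X_intpow ` ?S :: 'k fls set)"
    using fin by simp
  show "(fls_X_intpow ` ?S :: 'k fls set) \<subseteq> semigroup_ring H"
    by (auto simp: semigroup_ring_eq_monomial_span)
  fix f :: "'k fls"
  assume f: "f \<in> semigroup_ring H"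
  have inj: "inj_on (fls_X_intpow :: int \<Rightarrow> 'k fls) ?S"
    by (rule inj_onI) (metis fls_subdegree_fls_X_intpow)
  define g where "g = f - (\<Sum>n\<in>?S. fls_const (f $$ n) * fls_X_intpow n)"
  have g_nth: "g $$ k = (if k \<in> ?S then 0 else f $$ k)" for k
  proof -
    have "(\<Sum>n\<in>?S. (fls_const (f $$ n) * fls_X_intpow n) $$ k) = (\<Sum>n\<in>?S. if k = n then f $$ k else 0)"
      by (rule sum.cong) auto
    then show ?thesis
      using fin by (simp add: g_def fls_nth_sum)
  qed
  have f_supp: "finite (fls_support f)" "fls_support f \<subseteq> int ` H"
    using f by (auto simp: semigroup_ring_eq_monomial_span monomial_span_def)
  have "fls_support g \<subseteq> fls_support f"
    by (auto simp: fls_support_def g_nth)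
  moreover have "fls_support g \<subseteq> E"
    using f_supp(2) by (fastforce simp: fls_support_def g_nth split: if_splits)
  ultimately have "g \<in> monomial_span E"
    using f_supp(1) by (auto simp: monomial_span_def intro: finite_subset)
  then show "\<exists>c. f - (\<Sum>b\<in>fls_X_intpow ` ?S. fls_const (c b) * b) \<in> monomial_span E"
    by (intro exI[of _ "\<lambda>b. f $$ fls_subdegree b"]) (simp add: g_def sum.reindex[OF inj])
qed

lemma gorenstein_quot_gorenstein_exponents:
  assumes ns: "numerical_semigroup H" and b: "b \<in> int ` H"
  shows "gorenstein_quot (semigroup_ring H)
    (monomial_span (gorenstein_exponents H b) :: 'k::field fls set)"
proof -
  let ?R = "semigroup_ring H :: 'k fls set" and ?E = "gorenstein_exponents H b"
  let ?I = "monomial_span ?E :: 'k fls set"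
  have "int ` H - ?E \<subseteq> {0..b}"
    by (force simp: gorenstein_exponents_def)
  then have art: "artinian_quot ?R ?I"
    by (intro artinian_quot_monomial_span) (simp add: finite_subset)
  have b_notin: "fls_X_intpow b \<notin> ?I"
    using numerical_semigroup_zero[OF ns] by (simp add: gorenstein_exponents_def)
  have b_colon: "fls_X_intpow b \<in> colon ?R ?I (max_ideal ?R)"
  proof (rule fls_X_intpow_in_colon_max_ideal[OF b], intro ballI impI)
    fix h assume "h \<in> int ` H" "h \<noteq> 0"
    then show "b + h \<in> ?E"
      using numerical_semigroup_add[OF ns b] by (force simp: gorenstein_exponents_def)
  qed
  have "f - fls_const (f $$ b) * fls_X_intpow b \<in> ?I"
    if f: "f \<in> colon ?R ?I (max_ideal ?R)" for f
  proof -
    define g where "g = f - fls_const (f $$ b) * fls_X_intpow b"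
    have f_supp: "finite (fls_support f)" "fls_support f \<subseteq> int ` H"
      using f by (auto simp: colon_def semigroup_ring_eq_monomial_span monomial_span_def)
    have g_nth: "g $$ k = (if k = b then 0 else f $$ k)" for k
      by (simp add: g_def)
    have "b - k \<notin> int ` H" if k: "k \<in> fls_support g" for k
    proof
      assume bk: "b - k \<in> int ` H"
      have "k \<noteq> b" "f $$ k \<noteq> 0"
        using k by (auto simp: fls_support_def g_nth split: if_splits)
      moreover have "fls_X_intpow (b - k) \<in> ?R"
        using bk by (simp add: semigroup_ring_eq_monomial_span)
      ultimately have "fls_X_intpow (b - k) \<in> max_ideal ?R"
        by (simp add: max_ideal_def)
      then have "f * fls_X_intpow (b - k) \<in> ?I"
        using f unfolding colon_def by blast
      then have "fls_X_intpow (b - k) * f \<in> ?I"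
        by (simp only: fls_X_intpow_times_comm)
      moreover have "(fls_X_intpow (b - k) * f) $$ b \<noteq> 0"
        using \<open>f $$ k \<noteq> 0\<close> by simp
      ultimately have "b \<in> ?E"
        by (auto simp: monomial_span_def fls_support_def)
      then show False
        using numerical_semigroup_zero[OF ns] by (simp add: gorenstein_exponents_def)
    qed
    moreover have "fls_support g \<subseteq> fls_support f"
      by (auto simp: fls_support_def g_nth)
    ultimately show ?thesis
      using f_supp unfolding g_def[symmetric]
      by (auto simp: monomial_span_def gorenstein_exponents_def intro: finite_subset)
  qed
  then show ?thesis
    unfolding gorenstein_quot_def using art b_notin b_colon by blast
qed

subsection \<open>Multiplying an ideal by a unit\<close>

lemma ideal_gen_image_times_unit:
  fixes u v :: "'k::field fls"
  assumes vu: "v * u = 1"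
  shows "ideal_gen R ((*) u ` G) = (*) u ` ideal_gen R G"
proof -
  have vu_cancel: "v * (u * g) = g" for g
    using vu by (simp add: mult.assoc[symmetric])
  have uv: "u * v = 1"
    using vu by (simp add: mult.commute)
  have uv_cancel: "u * (v * g) = g" for g
    using uv by (simp add: mult.assoc[symmetric])
  have sub: "ideal_gen R ((*) w ` G') \<subseteq> (*) w ` ideal_gen R G'"
    if w: "inj ((*) w)" for w :: "'k fls" and G'
  proof
    fix x assume "x \<in> ideal_gen R ((*) w ` G')"
    then obtain c where x: "x = (\<Sum>g\<in>(*) w ` G'. c g * g)" and c: "\<forall>g\<in>(*) w ` G'. c g \<in> R"
      by (auto simp: ideal_gen_def)
    have "x = (\<Sum>g\<in>G'. c (w * g) * (w * g))"
      unfolding x by (simp add: sum.reindex[OF inj_on_subset[OF w subset_UNIV]])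
    also have "\<dots> = w * (\<Sum>g\<in>G'. c (w * g) * g)"
      by (simp add: sum_distrib_left mult.left_commute)
    finally have "x = w * (\<Sum>g\<in>G'. c (w * g) * g)" .
    moreover have "(\<Sum>g\<in>G'. c (w * g) * g) \<in> ideal_gen R G'"
      unfolding ideal_gen_def using c by (intro CollectI exI[of _ "\<lambda>g. c (w * g)"]) auto
    ultimately show "x \<in> (*) w ` ideal_gen R G'"
      by blast
  qed
  have inj_u: "inj ((*) u)"
    by (rule injI) (metis vu_cancel)
  have inj_v: "inj ((*) v)"
    by (rule injI) (metis uv_cancel)
  have "(*) u ` ideal_gen R G = (*) u ` ideal_gen R ((*) v ` (*) u ` G)"
    by (simp add: image_image vu_cancel)
  also have "\<dots> \<subseteq> (*) u ` (*) v ` ideal_gen R ((*) u ` G)"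
    using sub[OF inj_v] by (rule image_mono)
  also have "\<dots> = ideal_gen R ((*) u ` G)"
    by (simp add: image_image uv_cancel)
  finally show ?thesis
    using sub[OF inj_u] by blast
qed

lemma mu_image_times_unit:
  fixes u v :: "'k::field fls"
  assumes vu: "v * u = 1"
  shows "mu R ((*) u ` I) = mu R I"
proof -
  have transfer: "\<exists>G'. finite G' \<and> card G' = m \<and> G' \<subseteq> (*) w ` J \<and> ideal_gen R G' = (*) w ` J"
    if w: "w' * w = 1" and G: "finite G" "card G = m" "G \<subseteq> J" "ideal_gen R G = J"
    for w w' :: "'k fls" and m J G
  proof (intro exI conjI)
    have cancel: "w' * (w * g) = g" for g
      using w by (simp add: mult.assoc[symmetric])
    have "inj ((*) w)"
      by (rule injI) (metis cancel)
    then show "finite ((*) w ` G)" "card ((*) w ` G) = m"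
      using G by (simp_all add: card_image inj_on_subset[OF _ subset_UNIV])
    show "(*) w ` G \<subseteq> (*) w ` J" "ideal_gen R ((*) w ` G) = (*) w ` J"
      using G ideal_gen_image_times_unit[OF w] by auto
  qed
  have vuI: "(*) v ` (*) u ` I = I"
    using vu by (simp add: image_image mult.assoc[symmetric])
  have uv: "u * v = 1"
    using vu by (simp add: mult.commute)
  have "(\<exists>G. finite G \<and> card G = m \<and> G \<subseteq> (*) u ` I \<and> ideal_gen R G = (*) u ` I)
      \<longleftrightarrow> (\<exists>G. finite G \<and> card G = m \<and> G \<subseteq> I \<and> ideal_gen R G = I)" for m
  proof
    assume "\<exists>G. finite G \<and> card G = m \<and> G \<subseteq> (*) u ` I \<and> ideal_gen R G = (*) u ` I"
    then show "\<exists>G. finite G \<and> card G = m \<and> G \<subseteq> I \<and> ideal_gen R G = I"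
      using transfer[OF uv, of _ m "(*) u ` I"] unfolding vuI by blast
  next
    assume "\<exists>G. finite G \<and> card G = m \<and> G \<subseteq> I \<and> ideal_gen R G = I"
    then show "\<exists>G. finite G \<and> card G = m \<and> G \<subseteq> (*) u ` I \<and> ideal_gen R G = (*) u ` I"
      using transfer[OF vu, of _ m I] by blast
  qed
  then show ?thesis
    unfolding mu_def by simp
qed

lemma mu_le_one: "g \<in> I \<Longrightarrow> ideal_gen R {g} = I \<Longrightarrow> mu R I \<le> 1"
  unfolding mu_def by (rule Least_le) (rule exI[of _ "{g}"], simp)

lemma is_graded_ideal_image_times_fls_X_intpow:
  fixes I :: "'k::field fls set"
  assumes gi: "is_graded_ideal R I" and JR: "(*) (fls_X_intpow c) ` I \<subseteq> R"
  shows "is_graded_ideal R ((*) (fls_X_intpow c) ` I)"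
proof -
  let ?u = "fls_X_intpow c :: 'k fls"
  have id: "is_ideal R I" and gr: "\<forall>f\<in>I. \<forall>n. fls_const (f $$ n) * fls_X_intpow n \<in> I"
    using gi by (auto simp: is_graded_ideal_def)
  have "0 \<in> (*) ?u ` I"
    using id by (force simp: is_ideal_def)
  moreover have "?u * f + ?u * g \<in> (*) ?u ` I" if "f \<in> I" "g \<in> I" for f g
  proof (rule image_eqI)
    show "?u * f + ?u * g = ?u * (f + g)"
      by (simp add: distrib_left)
    show "f + g \<in> I"
      using id that by (simp add: is_ideal_def)
  qed
  moreover have "r * (?u * f) \<in> (*) ?u ` I" if "r \<in> R" "f \<in> I" for r f
  proof (rule image_eqI)
    show "r * (?u * f) = ?u * (r * f)"
      by (simp add: mult.left_commute)
    show "r * f \<in> I"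
      using id that by (simp add: is_ideal_def)
  qed
  moreover have "fls_const ((?u * f) $$ n) * fls_X_intpow n \<in> (*) ?u ` I" if "f \<in> I" for f n
  proof (rule image_eqI)
    show "fls_const ((?u * f) $$ n) * fls_X_intpow n
        = ?u * (fls_const (f $$ (n - c)) * fls_X_intpow (n - c))"
      by (rule fls_eqI) simp
    show "fls_const (f $$ (n - c)) * fls_X_intpow (n - c) \<in> I"
      using gr that by blast
  qed
  ultimately show ?thesis
    using JR unfolding is_graded_ideal_def is_ideal_def by blast
qed

lemma ideal_gen_singleton: "ideal_gen R {g} = (*) (g :: 'k::field fls) ` R"
  by (force simp: ideal_gen_def mult.commute)

subsection \<open>Symmetric semigroups\<close>

lemma symmetric_sgD: "symmetric_sg H \<Longrightarrow> z \<in> int ` H \<longleftrightarrow> a_inv H - z \<notin> int ` H"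
  unfolding symmetric_sg_def by blast

lemma a_inv_notin_if_symmetric_sg:
  "numerical_semigroup H \<Longrightarrow> symmetric_sg H \<Longrightarrow> a_inv H \<notin> int ` H"
  using numerical_semigroup_zero[of H] symmetric_sgD[of H 0] by simp

lemma image_plus_int_eq: "(+) c ` A = {m :: int. m - c \<in> A}"
  by (auto intro: image_eqI[of _ _ "_ - c"])

lemma image_plus_gorenstein_exponents:
  assumes "symmetric_sg H"
  shows "(+) (a_inv H - b) ` gorenstein_exponents H b = gorenstein_exponents H (2 * a_inv H - b)"
proof -
  have "m - (a_inv H - b) \<in> gorenstein_exponents H b
      \<longleftrightarrow> m \<in> gorenstein_exponents H (2 * a_inv H - b)" for m
  proof -
    have e1: "b - (m - (a_inv H - b)) = a_inv H - m"
      by simp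
    have e2: "a_inv H - (m - (a_inv H - b)) = (2 * a_inv H - b) - m"
      by simp
    have "b - (m - (a_inv H - b)) \<notin> int ` H \<longleftrightarrow> m \<in> int ` H"
      using symmetric_sgD[OF assms, of m] unfolding e1 by blast
    moreover have "m - (a_inv H - b) \<in> int ` H \<longleftrightarrow> (2 * a_inv H - b) - m \<notin> int ` H"
      using symmetric_sgD[OF assms, of "m - (a_inv H - b)"] unfolding e2 .
    ultimately show ?thesis
      unfolding gorenstein_exponents_def mem_Collect_eq by blast
  qed
  then show ?thesis
    unfolding image_plus_int_eq by blast
qed

lemma gorenstein_exponents_eq_image_plus:
  assumes ns: "numerical_semigroup H" and sym: "symmetric_sg H"
    and d: "b - a_inv H \<in> int ` H"
  shows "gorenstein_exponents H b = (+) (b - a_inv H) ` int ` H"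
proof -
  have "n \<in> gorenstein_exponents H b \<longleftrightarrow> n - (b - a_inv H) \<in> int ` H" for n
  proof -
    have "b - n \<in> int ` H \<longleftrightarrow> n - (b - a_inv H) \<notin> int ` H"
      using symmetric_sgD[OF sym, of "b - n"] by (simp add: algebra_simps)
    moreover have "n \<in> int ` H" if "n - (b - a_inv H) \<in> int ` H"
      using numerical_semigroup_add[OF ns d that] by simp
    ultimately show ?thesis
      unfolding gorenstein_exponents_def by blast
  qed
  then show ?thesis
    unfolding image_plus_int_eq by blast
qed

lemma a_quot_minus_a_inv_notin:
  fixes I :: "'k::field fls set"
  assumes ns: "numerical_semigroup H" and sym: "symmetric_sg H"
    and I: "I \<in> X_R (semigroup_ring H)"
  shows "a_quot (semigroup_ring H) I - a_inv H \<notin> int ` H"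
proof
  let ?R = "semigroup_ring H :: 'k fls set"
  define d where "d = a_quot ?R I - a_inv H"
  assume "a_quot ?R I - a_inv H \<in> int ` H"
  then have d: "d \<in> int ` H"
    by (simp add: d_def)
  have "I = monomial_span (gorenstein_exponents H (a_quot ?R I))"
    using gorenstein_graded_ideal_eq[OF ns] I unfolding X_R_def by blast
  also have "gorenstein_exponents H (a_quot ?R I) = (+) d ` int ` H"
    unfolding d_def by (rule gorenstein_exponents_eq_image_plus[OF ns sym d[unfolded d_def]])
  finally have I_d: "I = monomial_span ((+) d ` int ` H)" .
  also have "\<dots> = (*) (fls_X_intpow d) ` ?R"
    by (simp only: semigroup_ring_eq_monomial_span image_times_fls_X_intpow_monomial_span)
  also have "\<dots> = ideal_gen ?R {fls_X_intpow d}"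
    by (simp only: ideal_gen_singleton)
  finally have "ideal_gen ?R {fls_X_intpow d} = I" ..
  moreover have "fls_X_intpow d \<in> I"
    using numerical_semigroup_zero[OF ns] by (force simp: I_d)
  ultimately have "mu ?R I \<le> 1"
    by (rule mu_le_one[rotated])
  with I show False
    by (simp add: X_R_def)
qed

lemma image_times_fls_X_intpow_in_X_R:
  fixes I :: "'k::field fls set"
  assumes ns: "numerical_semigroup H" and sym: "symmetric_sg H"
    and I: "I \<in> X_R (semigroup_ring H)"
  defines "b \<equiv> a_quot (semigroup_ring H) I"
  shows "(*) (fls_X_intpow (a_inv H - b)) ` I \<in> X_R (semigroup_ring H)
    \<and> a_quot (semigroup_ring H) ((*) (fls_X_intpow (a_inv H - b)) ` I) = 2 * a_inv H - b"
proof -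
  let ?R = "semigroup_ring H :: 'k fls set" and ?u = "fls_X_intpow (a_inv H - b) :: 'k fls"
  have gi: "is_graded_ideal ?R I" and gor: "gorenstein_quot ?R I" and mu: "mu ?R I \<ge> 2"
    using I by (simp_all add: X_R_def)
  have I_b: "I = monomial_span (gorenstein_exponents H b)"
    using gorenstein_graded_ideal_eq[OF ns gi gor] by (simp add: b_def)
  have "a_inv H - (b - a_inv H) \<in> int ` H"
    using a_quot_minus_a_inv_notin[OF ns sym I, folded b_def] symmetric_sgD[OF sym, of "b - a_inv H"]
    by simp
  then have \<sigma>: "2 * a_inv H - b \<in> int ` H"
    by (simp add: algebra_simps)
  have J_eq: "(*) ?u ` I = monomial_span (gorenstein_exponents H (2 * a_inv H - b))"
    unfolding I_b
    by (simp only: image_times_fls_X_intpow_monomial_span image_plus_gorenstein_exponents[OF sym])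
  have "(*) ?u ` I \<subseteq> ?R"
    unfolding J_eq semigroup_ring_eq_monomial_span
    by (rule monomial_span_mono[OF gorenstein_exponents_subset])
  then have "is_graded_ideal ?R ((*) ?u ` I)"
    by (rule is_graded_ideal_image_times_fls_X_intpow[OF gi])
  moreover have "gorenstein_quot ?R ((*) ?u ` I)"
    unfolding J_eq by (rule gorenstein_quot_gorenstein_exponents[OF ns \<sigma>])
  moreover have "mu ?R ((*) ?u ` I) = mu ?R I"
    by (rule mu_image_times_unit[of "fls_X_intpow (b - a_inv H)"])
      (simp only: fls_X_intpow_times_fls_X_intpow, simp)
  moreover have "a_quot ?R ((*) ?u ` I) = 2 * a_inv H - b"
    unfolding J_eq by (rule a_quot_gorenstein_exponents[OF ns \<sigma>])
  ultimately show ?thesis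
    using mu by (simp add: X_R_def)
qed

theorem corollary4p1:
  fixes H :: "nat set" and I :: "'k::field fls set"
  defines "R \<equiv> (semigroup_ring H :: 'k fls set)"
  defines "a \<equiv> a_inv H"
  defines "J \<equiv> (\<lambda>f. fls_X_intpow (a - a_quot R I) * f) ` I"
  assumes "numerical_semigroup H"
    and "symmetric_sg H"
    and "I \<in> X_R R"
  shows "(J \<in> X_R R \<and> a_quot R J = 2 * a - a_quot R I
          \<and> (a_quot R I < a \<longrightarrow> a_quot R J > a)
          \<and> (a_quot R I > a \<longrightarrow> a_quot R J < a))
       \<and> (a_quot R I \<in> int ` H \<and> a \<noteq> a_quot R I \<and> a - a_quot R I \<notin> int ` H)
       \<and> (a_quot R I < a \<longrightarrow> a - a_quot R I \<ge> 0 \<and> a - a_quot R I \<notin> int ` H)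
       \<and> (a_quot R I > a \<longrightarrow> a_quot R I - a \<ge> 0 \<and> a_quot R I - a \<notin> int ` H)"
proof -
  note ns = assms(4) and sym = assms(5) and I = assms(6)[unfolded R_def]
  let ?b = "a_quot R I"
  have bH: "?b \<in> int ` H"
    using gorenstein_graded_ideal_eq[OF ns] I unfolding X_R_def R_def by blast
  have "a \<notin> int ` H"
    using a_inv_notin_if_symmetric_sg[OF ns sym] by (simp add: a_def)
  then have "a \<noteq> ?b"
    using bH by auto
  moreover have "a - ?b \<notin> int ` H"
    using bH symmetric_sgD[OF sym, of ?b] by (simp add: a_def)
  moreover have "?b - a \<notin> int ` H"
    using a_quot_minus_a_inv_notin[OF ns sym I] by (simp add: a_def R_def)
  moreover have "J \<in> X_R R \<and> a_quot R J = 2 * a - ?b"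
    using image_times_fls_X_intpow_in_X_R[OF ns sym I] by (simp add: J_def a_def R_def)
  ultimately show ?thesis
    using bH by auto
qed

end
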